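(* Let $\mathbb{F}$ be an algebraically closed field with $\mathrm{char}\,\mathbb{F}=2$. Let $\underline{a},\underline{b}\in\mathbf{O}^n$, let $A\in{\rm GL}_n(\mathbb{F})$, and put $\underline{a}'=\underline{a}A$, $\underline{b}'=\underline{b}A$. Then: (a) ${\rm G}_2\underline{a}={\rm G}_2\underline{b}$ if and only if ${\rm G}_2\underline{a}'={\rm G}_2\underline{b}'$; (b) for every $d\ge2$, $f(\underline{a})=f(\underline{b})$ for all $f\in S_n^{(d)}$ if and only if $f(\underline{a}')=f(\underline{b}')$ for all $f\in S_n^{(d)}$; (c) the orbit ${\rm G}_2\underline{a}$ is Zariski closed in $\mathbf{O}^n$ if and only if ${\rm G}_2\underline{a}'$ is Zariski closed in $\mathbf{O}^n$.
   Context: The split octonion algebra $\mathbf{O}$ is the 8-dimensional $\mathbb{F}$-vector space of formal matrices $a=\begin{pmatrix}\alpha&\mathbf{u}\\ \mathbf{v}&\beta\end{pmatrix}$ with $\alpha,\beta\in\mathbb{F}$, $\mathbf{u},\mathbf{v}\in\mathbb{F}^3$, with multiplication $\begin{pmatrix}\alpha&\mathbf{u}\\ \mathbf{v}&\beta\end{pmatrix}\begin{pmatrix}\alpha'&\mathbf{u}'\\ \mathbf{v}'&\beta'\end{pmatrix}=\begin{pmatrix}\alpha\alpha'+\mathbf{u}\cdot\mathbf{v}'&\alpha\mathbf{u}'+\beta'\mathbf{u}-\mathbf{v}\times\mathbf{v}'\\ \alpha'\mathbf{v}+\beta\mathbf{v}'+\mathbf{u}\times\mathbf{u}'&\beta\beta'+\mathbf{v}\cdot\mathbf{u}'\end{pmatrix}$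 (dot product and cross product on $\mathbb{F}^3$). Trace $\mathrm{tr}(a)=\alpha+\beta$, norm $n(a)=\alpha\beta-\mathbf{u}\cdot\mathbf{v}$. ${\rm G}_2=\mathrm{Aut}(\mathbf{O})$ acts diagonally on $\mathbf{O}^n$. ${\rm GL}_n(\mathbb{F})$ acts on $\mathbf{O}^n$ on the right: for $A=(\alpha_{ij})$, $(\underline{a}A)_i=\sum_{k=1}^n\alpha_{ki}a_k$. $S_n$ is the set of polynomial functions on $\mathbf{O}^n$ consisting of $\underline{a}\mapsto n(a_i)$ ($1\le i\le n$, degree $2$) and $\underline{a}\mapsto\mathrm{tr}((\cdots((a_{i_1}a_{i_2})a_{i_3})\cdots)a_{i_k})$ for $k\ge1$, $1\le i_1<\cdots<i_k\le n$ (degree $k$); $S_n^{(d)}$ is its subset of elements of degree at most $d$. *)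

theory Defs
  imports "HOL-Computational_Algebra.Polynomial"
begin

datatype 'f vec3 = V3 'f 'f 'f

fun dot3 :: "'f::comm_ring_1 vec3 \<Rightarrow> 'f vec3 \<Rightarrow> 'f" where
  "dot3 (V3 x1 x2 x3) (V3 y1 y2 y3) = x1*y1 + x2*y2 + x3*y3"

fun cross3 :: "'f::comm_ring_1 vec3 \<Rightarrow> 'f vec3 \<Rightarrow> 'f vec3" where
  "cross3 (V3 x1 x2 x3) (V3 y1 y2 y3) =
     V3 (x2*y3 - x3*y2) (x3*y1 - x1*y3) (x1*y2 - x2*y1)"

fun vadd3 :: "'f::comm_ring_1 vec3 \<Rightarrow> 'f vec3 \<Rightarrow> 'f vec3" where
  "vadd3 (V3 x1 x2 x3) (V3 y1 y2 y3) = V3 (x1+y1) (x2+y2) (x3+y3)"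

fun vsub3 :: "'f::comm_ring_1 vec3 \<Rightarrow> 'f vec3 \<Rightarrow> 'f vec3" where
  "vsub3 (V3 x1 x2 x3) (V3 y1 y2 y3) = V3 (x1-y1) (x2-y2) (x3-y3)"

fun vsmult3 :: "'f::comm_ring_1 \<Rightarrow> 'f vec3 \<Rightarrow> 'f vec3" where
  "vsmult3 c (V3 x1 x2 x3) = V3 (c*x1) (c*x2) (c*x3)"

text \<open>Oct alpha u v beta represents the formal matrix with rows (alpha, u) and (v, beta).\<close>
datatype 'f oct = Oct 'f "'f vec3" "'f vec3" 'f

fun oct_add :: "'f::comm_ring_1 oct \<Rightarrow> 'f oct \<Rightarrow> 'f oct" where
  "oct_add (Oct a u v b) (Oct a' u' v' b') = Oct (a+a') (vadd3 u u') (vadd3 v v') (b+b')"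

definition oct_zero :: "'f::comm_ring_1 oct" where
  "oct_zero = Oct 0 (V3 0 0 0) (V3 0 0 0) 0"

fun oct_smult :: "'f::comm_ring_1 \<Rightarrow> 'f oct \<Rightarrow> 'f oct" where
  "oct_smult c (Oct a u v b) = Oct (c*a) (vsmult3 c u) (vsmult3 c v) (c*b)"

fun oct_mult :: "'f::comm_ring_1 oct \<Rightarrow> 'f oct \<Rightarrow> 'f oct" where
  "oct_mult (Oct a u v b) (Oct a' u' v' b') =
     Oct (a*a' + dot3 u v')
         (vsub3 (vadd3 (vsmult3 a u') (vsmult3 b' u)) (cross3 v v'))
         (vadd3 (vadd3 (vsmult3 a' v) (vsmult3 b v')) (cross3 u u'))
         (b*b' + dot3 v u')"

fun oct_tr :: "'f::comm_ring_1 oct \<Rightarrow> 'f" where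
  "oct_tr (Oct a u v b) = a + b"

fun oct_norm :: "'f::comm_ring_1 oct \<Rightarrow> 'f" where
  "oct_norm (Oct a u v b) = a*b - dot3 u v"

fun oct_coord :: "'f oct \<Rightarrow> nat \<Rightarrow> 'f" where
  "oct_coord (Oct a (V3 u1 u2 u3) (V3 v1 v2 v3) b) j =
     [a, u1, u2, u3, v1, v2, v3, b] ! j"

definition G2 :: "('f::field oct \<Rightarrow> 'f oct) set" where
  "G2 = {g. bij g \<and> (\<forall>x y. g (oct_add x y) = oct_add (g x) (g y))
              \<and> (\<forall>c x. g (oct_smult c x) = oct_smult c (g x))
              \<and> (\<forall>x y. g (oct_mult x y) = oct_mult (g x) (g y))}"

definition octn :: "nat \<Rightarrow> 'f oct list set" where
  "octn n = {xs. length xs = n}"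

definition G2_orbit :: "'f::field oct list \<Rightarrow> 'f oct list set" where
  "G2_orbit xs = (\<lambda>g. map g xs) ` G2"

text \<open>n x n matrices as functions nat => nat => 'f (entries with indices < n matter).\<close>
definition invertible_mat :: "nat \<Rightarrow> (nat \<Rightarrow> nat \<Rightarrow> 'f::field) \<Rightarrow> bool" where
  "invertible_mat n A \<longleftrightarrow> (\<exists>B.
      (\<forall>i<n. \<forall>j<n. (\<Sum>k<n. A i k * B k j) = (if i = j then 1 else 0)) \<and>
      (\<forall>i<n. \<forall>j<n. (\<Sum>k<n. B i k * A k j) = (if i = j then 1 else 0)))"

definition oct_sum_list :: "'f::comm_ring_1 oct list \<Rightarrow> 'f oct" where
  "oct_sum_list xs = foldr oct_add xs oct_zero"

definition gl_act :: "'f::comm_ring_1 oct list \<Rightarrow> (nat \<Rightarrow> nat \<Rightarrow> 'f) \<Rightarrow> 'f oct list" where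
  "gl_act xs A = map (\<lambda>i. oct_sum_list (map (\<lambda>k. oct_smult (A k i) (xs ! k)) [0..<length xs]))
                     [0..<length xs]"

definition lnprod :: "'f::comm_ring_1 oct list \<Rightarrow> nat list \<Rightarrow> 'f oct" where
  "lnprod xs is = foldl (\<lambda>p i. oct_mult p (xs ! i)) (xs ! hd is) (tl is)"

definition Sd :: "nat \<Rightarrow> nat \<Rightarrow> ('f::comm_ring_1 oct list \<Rightarrow> 'f) set" where
  "Sd n d =
     {(\<lambda>xs. oct_norm (xs ! i)) | i. i < n \<and> 2 \<le> d} \<union>
     {(\<lambda>xs. oct_tr (lnprod xs is)) | is. is \<noteq> [] \<and> sorted_wrt (<) is \<and>
          (\<forall>i\<in>set is. i < n) \<and> length is \<le> d}"

inductive_set poly_fun :: "nat \<Rightarrow> ('f::comm_ring_1 oct list \<Rightarrow> 'f) set" for n where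
  pconst: "(\<lambda>_. c) \<in> poly_fun n"
| pcoord: "i < n \<Longrightarrow> j < 8 \<Longrightarrow> (\<lambda>xs. oct_coord (xs ! i) j) \<in> poly_fun n"
| padd: "p \<in> poly_fun n \<Longrightarrow> q \<in> poly_fun n \<Longrightarrow> (\<lambda>xs. p xs + q xs) \<in> poly_fun n"
| pmult: "p \<in> poly_fun n \<Longrightarrow> q \<in> poly_fun n \<Longrightarrow> (\<lambda>xs. p xs * q xs) \<in> poly_fun n"

definition zariski_closed :: "nat \<Rightarrow> 'f::comm_ring_1 oct list set \<Rightarrow> bool" where
  "zariski_closed n X \<longleftrightarrow>
     (\<exists>P \<subseteq> poly_fun n. X = {xs \<in> octn n. \<forall>p\<in>P. p xs = 0})"

end

(*
  The map x \<mapsto> x A is a linear automorphism of O^n with inverse x \<mapsto> x A^-1.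
  It commutes with the diagonal (linear) action of G2, which gives (a), and both it and
  its inverse are polynomial maps, which gives (c).

  For (b), the right alternative law and its linearization
    (p x) x = tr(x) p x - n(x) p,
    (p x) y + (p y) x = tr(x) p y + tr(y) p x + (tr(y x) - tr(x) tr(y)) p
  rewrite the trace of every left-normed word of length at most d in the entries of x
  as a polynomial in the functions of S_n^(d). By multilinearity, the word
  traces of x A are linear combinations of word traces of x of the same length, with
  coefficients independent of x, and n((x A)_i) is determined by the norms, traces and
  pairwise product traces of the entries of x.
*)
theory Submission
  imports Defs
begin

lemma oct_full_cases:
  obtains a u1 u2 u3 v1 v2 v3 b where "x = Oct a (V3 u1 u2 u3) (V3 v1 v2 v3) b"
  by (metis oct.exhaust vec3.exhaust)

definition oct_one :: "'f::comm_ring_1 oct" where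
  "oct_one = Oct 1 (V3 0 0 0) (V3 0 0 0) 1"

context
  fixes x y z :: "'f::comm_ring_1 oct" and c d :: 'f
begin

lemma oct_add_assoc: "oct_add (oct_add x y) z = oct_add x (oct_add y z)"
  by (cases x rule: oct_full_cases; cases y rule: oct_full_cases; cases z rule: oct_full_cases)
    (simp add: algebra_simps)

lemma oct_add_zero_left [simp]: "oct_add oct_zero x = x"
  by (cases x rule: oct_full_cases) (simp add: oct_zero_def)

lemma oct_add_zero_right [simp]: "oct_add x oct_zero = x"
  by (cases x rule: oct_full_cases) (simp add: oct_zero_def)

lemma oct_smult_add: "oct_smult c (oct_add x y) = oct_add (oct_smult c x) (oct_smult c y)"
  by (cases x rule: oct_full_cases; cases y rule: oct_full_cases) (simp add: algebra_simps)

lemma oct_smult_smult [simp]: "oct_smult c (oct_smult d x) = oct_smult (c * d) x"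
  by (cases x rule: oct_full_cases) (simp add: algebra_simps)

lemma oct_smult_zero [simp]: "oct_smult c oct_zero = oct_zero"
  by (simp add: oct_zero_def)

lemma oct_smult_1 [simp]: "oct_smult 1 x = x"
  by (cases x rule: oct_full_cases) simp

lemma oct_smult_0 [simp]: "oct_smult 0 x = oct_zero"
  by (cases x rule: oct_full_cases) (simp add: oct_zero_def)

lemma oct_mult_add_left: "oct_mult (oct_add x y) z = oct_add (oct_mult x z) (oct_mult y z)"
  by (cases x rule: oct_full_cases; cases y rule: oct_full_cases; cases z rule: oct_full_cases)
    (simp add: algebra_simps)

lemma oct_mult_add_right: "oct_mult x (oct_add y z) = oct_add (oct_mult x y) (oct_mult x z)"
  by (cases x rule: oct_full_cases; cases y rule: oct_full_cases; cases z rule: oct_full_cases)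
    (simp add: algebra_simps)

lemma oct_mult_smult_left [simp]: "oct_mult (oct_smult c x) y = oct_smult c (oct_mult x y)"
  by (cases x rule: oct_full_cases; cases y rule: oct_full_cases) (simp add: algebra_simps)

lemma oct_mult_smult_right [simp]: "oct_mult x (oct_smult c y) = oct_smult c (oct_mult x y)"
  by (cases x rule: oct_full_cases; cases y rule: oct_full_cases) (simp add: algebra_simps)

lemma oct_mult_zero_left [simp]: "oct_mult oct_zero x = oct_zero"
  by (cases x rule: oct_full_cases) (simp add: oct_zero_def)

lemma oct_mult_zero_right [simp]: "oct_mult x oct_zero = oct_zero"
  by (cases x rule: oct_full_cases) (simp add: oct_zero_def)

lemma oct_tr_add [simp]: "oct_tr (oct_add x y) = oct_tr x + oct_tr y"
  by (cases x rule: oct_full_cases; cases y rule: oct_full_cases) simp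

lemma oct_tr_smult [simp]: "oct_tr (oct_smult c x) = c * oct_tr x"
  by (cases x rule: oct_full_cases) (simp add: algebra_simps)

lemma oct_tr_zero [simp]: "oct_tr (oct_zero :: 'f oct) = 0"
  by (simp add: oct_zero_def)

lemma oct_norm_add:
  "oct_norm (oct_add x y) = oct_norm x + oct_norm y + oct_tr x * oct_tr y - oct_tr (oct_mult x y)"
  by (cases x rule: oct_full_cases; cases y rule: oct_full_cases) (simp add: algebra_simps)

lemma oct_norm_smult [simp]: "oct_norm (oct_smult c x) = c * c * oct_norm x"
  by (cases x rule: oct_full_cases) (simp add: algebra_simps)

lemma oct_mult_one_left [simp]: "oct_mult oct_one x = x"
  by (cases x rule: oct_full_cases) (simp add: oct_one_def)

lemma oct_coord_add: "j < 8 \<Longrightarrow> oct_coord (oct_add x y) j = oct_coord x j + oct_coord y j"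
  by (cases x rule: oct_full_cases; cases y rule: oct_full_cases)
    (auto simp: less_Suc_eq numeral_eq_Suc)

lemma oct_coord_smult: "j < 8 \<Longrightarrow> oct_coord (oct_smult c x) j = c * oct_coord x j"
  by (cases x rule: oct_full_cases) (auto simp: less_Suc_eq numeral_eq_Suc)

lemma oct_coord_zero: "j < 8 \<Longrightarrow> oct_coord (oct_zero :: 'f oct) j = 0"
  by (auto simp: less_Suc_eq numeral_eq_Suc oct_zero_def)

lemma oct_eqI:
  assumes "\<And>j. j < 8 \<Longrightarrow> oct_coord x j = oct_coord y j"
  shows "x = y"
  using assms[of 0] assms[of 1] assms[of 2] assms[of 3]
    assms[of 4] assms[of 5] assms[of 6] assms[of 7]
  by (cases x rule: oct_full_cases; cases y rule: oct_full_cases) simp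

lemma oct_mult_right_square:
  "oct_mult (oct_mult x y) y = oct_add (oct_smult (oct_tr y) (oct_mult x y)) (oct_smult (- oct_norm y) x)"
  by (cases x rule: oct_full_cases; cases y rule: oct_full_cases) (simp add: algebra_simps)

lemma oct_mult_right_swap:
  "oct_add (oct_mult (oct_mult x y) z) (oct_mult (oct_mult x z) y) =
    oct_add (oct_smult (oct_tr y) (oct_mult x z))
      (oct_add (oct_smult (oct_tr z) (oct_mult x y))
        (oct_smult (oct_tr (oct_mult z y) - oct_tr y * oct_tr z) x))"
  by (cases x rule: oct_full_cases; cases y rule: oct_full_cases; cases z rule: oct_full_cases)
    (simp add: algebra_simps)

end

lemma oct_sum_list_Nil [simp]: "oct_sum_list [] = oct_zero"
  by (simp add: oct_sum_list_def)

lemma oct_sum_list_Cons [simp]: "oct_sum_list (x # xs) = oct_add x (oct_sum_list xs)"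
  by (simp add: oct_sum_list_def)

lemma oct_sum_list_append:
  "oct_sum_list (xs @ ys) = oct_add (oct_sum_list xs) (oct_sum_list ys)"
  by (induction xs) (simp_all add: oct_add_assoc)

lemma oct_sum_list_concat: "oct_sum_list (concat xss) = oct_sum_list (map oct_sum_list xss)"
  by (induction xss) (simp_all add: oct_sum_list_append)

lemma oct_tr_sum_list: "oct_tr (oct_sum_list (map f L)) = (\<Sum>l\<leftarrow>L. oct_tr (f l))"
  by (induction L) simp_all

lemma oct_coord_sum_list:
  "j < 8 \<Longrightarrow> oct_coord (oct_sum_list (map f L)) j = (\<Sum>l\<leftarrow>L. oct_coord (f l) j)"
  by (induction L) (simp_all add: oct_coord_add oct_coord_zero)

lemma oct_mult_sum_list_left:
  "oct_mult (oct_sum_list (map f L)) y = oct_sum_list (map (\<lambda>l. oct_mult (f l) y) L)"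
  by (induction L) (simp_all add: oct_mult_add_left)

lemma oct_mult_sum_list_right:
  "oct_mult x (oct_sum_list (map f L)) = oct_sum_list (map (\<lambda>l. oct_mult x (f l)) L)"
  by (induction L) (simp_all add: oct_mult_add_right)

lemma oct_smult_sum_list:
  "oct_smult c (oct_sum_list (map f L)) = oct_sum_list (map (\<lambda>l. oct_smult c (f l)) L)"
  by (induction L) (simp_all add: oct_smult_add)

definition word_prod :: "'f::comm_ring_1 oct list \<Rightarrow> nat list \<Rightarrow> 'f oct" where
  "word_prod xs w = foldl (\<lambda>p i. oct_mult p (xs ! i)) oct_one w"

definition word_tr :: "'f::comm_ring_1 oct list \<Rightarrow> nat list \<Rightarrow> 'f" where
  "word_tr xs w = oct_tr (word_prod xs w)"

lemma word_prod_snoc: "word_prod xs (w @ [k]) = oct_mult (word_prod xs w) (xs ! k)"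
  by (simp add: word_prod_def)

lemma lnprod_eq_word_prod: "w \<noteq> [] \<Longrightarrow> lnprod xs w = word_prod xs w"
  by (cases w) (simp_all add: lnprod_def word_prod_def)

lemma word_tr_Nil: "word_tr xs [] = oct_tr (oct_one :: 'f::comm_ring_1 oct)"
  by (simp add: word_tr_def word_prod_def)

lemma word_tr_single: "word_tr xs [k] = oct_tr (xs ! k)"
  by (simp add: word_tr_def word_prod_def)

lemma word_tr_pair: "word_tr xs [k, l] = oct_tr (oct_mult (xs ! k) (xs ! l))"
  by (simp add: word_tr_def word_prod_def)

lemma foldl_right_mult_add:
  "foldl (\<lambda>p i. oct_mult p (xs ! i)) (oct_add y z) v =
    oct_add (foldl (\<lambda>p i. oct_mult p (xs ! i)) y v) (foldl (\<lambda>p i. oct_mult p (xs ! i)) z v)"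
  by (induction v arbitrary: y z) (simp_all add: oct_mult_add_left)

lemma foldl_right_mult_smult:
  "foldl (\<lambda>p i. oct_mult p (xs ! i)) (oct_smult c y) v =
    oct_smult c (foldl (\<lambda>p i. oct_mult p (xs ! i)) y v)"
  by (induction v arbitrary: y) simp_all

lemma word_tr_append_split:
  "word_tr xs (u @ w @ v) =
    oct_tr (foldl (\<lambda>p i. oct_mult p (xs ! i))
      (foldl (\<lambda>p i. oct_mult p (xs ! i)) (word_prod xs u) w) v)"
  by (simp add: word_tr_def word_prod_def)

lemma word_tr_swap:
  "word_tr xs (u @ k # l # v) + word_tr xs (u @ l # k # v) =
    word_tr xs [k] * word_tr xs (u @ l # v) + word_tr xs [l] * word_tr xs (u @ k # v)
    + (word_tr xs [l, k] - word_tr xs [k] * word_tr xs [l]) * word_tr xs (u @ v)"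
  using word_tr_append_split[of xs u "[k, l]" v] word_tr_append_split[of xs u "[l, k]" v]
    word_tr_append_split[of xs u "[k]" v] word_tr_append_split[of xs u "[l]" v]
    word_tr_append_split[of xs u "[]" v]
    arg_cong[OF oct_mult_right_swap[of "word_prod xs u" "xs ! k" "xs ! l"],
      of "\<lambda>y. oct_tr (foldl (\<lambda>p i. oct_mult p (xs ! i)) y v)"]
  by (simp add: foldl_right_mult_add foldl_right_mult_smult word_tr_single word_tr_pair)

lemma word_tr_square:
  "word_tr xs (u @ k # k # v) =
    word_tr xs [k] * word_tr xs (u @ k # v) - oct_norm (xs ! k) * word_tr xs (u @ v)"
  using word_tr_append_split[of xs u "[k, k]" v] word_tr_append_split[of xs u "[k]" v]
    word_tr_append_split[of xs u "[]" v]
  by (simp add: oct_mult_right_square foldl_right_mult_add foldl_right_mult_smult word_tr_single)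

lemma not_sorted_wrt_less_split:
  "\<not> sorted_wrt (<) (w :: nat list) \<Longrightarrow> \<exists>u k l v. w = u @ k # l # v \<and> l \<le> k"
proof (induction w)
  case Nil
  then show ?case by simp
next
  case (Cons i w)
  show ?case
  proof (cases "sorted_wrt (<) w")
    case True
    then obtain j w' where w: "w = j # w'" and "\<not> i < j"
      using Cons.prems by (cases w) (auto dest: order.strict_trans)
    then show ?thesis by (intro exI[of _ "[]"]) auto
  next
    case False
    then obtain u k l v where "w = u @ k # l # v \<and> l \<le> k" using Cons.IH by blast
    then show ?thesis by (intro exI[of _ "i # u"]) auto
  qed
qed

lemma sorted_word_tr_eq_if_Sd_eq:
  assumes "\<forall>f\<in>Sd n d. f a = f b"
    and "sorted_wrt (<) w" and "set w \<subseteq> {..<n}" and "length w \<le> d"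
  shows "word_tr a w = word_tr b w"
proof (cases "w = []")
  case False
  with assms(2-4) have "(\<lambda>xs. oct_tr (lnprod xs w)) \<in> Sd n d"
    unfolding Sd_def by blast
  then have "oct_tr (lnprod a w) = oct_tr (lnprod b w)" using assms(1) by fastforce
  with False show ?thesis by (simp add: word_tr_def lnprod_eq_word_prod)
qed (simp add: word_tr_Nil)

lemma oct_norm_eq_if_Sd_eq:
  assumes "\<forall>f\<in>Sd n d. f a = f b" and "2 \<le> d" and "k < n"
  shows "oct_norm (a ! k) = oct_norm (b ! k)"
proof -
  have "(\<lambda>xs. oct_norm (xs ! k)) \<in> Sd n d" unfolding Sd_def using assms(2,3) by blast
  with assms(1) show ?thesis by auto
qed

text \<open>Induction along the length-lexicographic order: word_tr_swap trades an adjacent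
  descent k > l for the smaller word with l k exchanged plus shorter words, and
  word_tr_square trades a repeated adjacent letter for shorter words.\<close>

lemma word_tr_eq_if_Sd_eq:
  assumes agree: "\<forall>f\<in>Sd n d. f a = f b" and d: "2 \<le> d"
  shows "set w \<subseteq> {..<n} \<Longrightarrow> length w \<le> d \<Longrightarrow> word_tr a w = word_tr b w"
proof (induction w rule: wf_induct_rule[OF wf_lenlex[OF wf_less_than]])
  case (1 w)
  have shorter: "word_tr a w' = word_tr b w'" if "length w' < length w" "set w' \<subseteq> {..<n}" for w'
    using 1 that by (auto simp: lenlex_conv)
  show ?case
  proof (cases "sorted_wrt (<) w")
    case True
    then show ?thesis using sorted_word_tr_eq_if_Sd_eq[OF agree] 1(2,3) by blast
  next
    case False
    then obtain u k l v where w: "w = u @ k # l # v" and "l \<le> k"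
      using not_sorted_wrt_less_split by blast
    have kn: "k < n" and ln: "l < n" using 1(2) w by auto
    have k: "word_tr a [k] = word_tr b [k]" and l: "word_tr a [l] = word_tr b [l]"
      using shorter[of "[k]"] shorter[of "[l]"] kn ln w by auto
    have uv: "word_tr a (u @ v) = word_tr b (u @ v)"
      and ukv: "word_tr a (u @ k # v) = word_tr b (u @ k # v)"
      and ulv: "word_tr a (u @ l # v) = word_tr b (u @ l # v)"
      using shorter[of "u @ v"] shorter[of "u @ k # v"] shorter[of "u @ l # v"] 1(2) w by auto
    show ?thesis
    proof (cases "l = k")
      case True
      have "oct_norm (a ! k) = oct_norm (b ! k)" using oct_norm_eq_if_Sd_eq[OF agree d kn] .
      then show ?thesis unfolding w True word_tr_square using k ukv uv by simp
    next
      case False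
      with \<open>l \<le> k\<close> have "l < k" by simp
      then have "(u @ l # k # v, w) \<in> lenlex less_than"
        unfolding w lenlex_conv lex_conv by auto
      with 1 w have ulkv: "word_tr a (u @ l # k # v) = word_tr b (u @ l # k # v)"
        by auto
      have lk: "word_tr a [l, k] = word_tr b [l, k]"
        using sorted_word_tr_eq_if_Sd_eq[OF agree, of "[l, k]"] \<open>l < k\<close> kn ln d by auto
      have "word_tr a w + word_tr a (u @ l # k # v) = word_tr b w + word_tr b (u @ l # k # v)"
        using word_tr_swap[of a u k l v] word_tr_swap[of b u k l v]
        unfolding w k l uv ukv ulv lk by simp
      with ulkv show ?thesis by simp
    qed
  qed
qed

lemma length_gl_act [simp]: "length (gl_act xs A) = length xs"
  by (simp add: gl_act_def)

lemma nth_gl_act: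
  "i < length xs \<Longrightarrow>
    gl_act xs A ! i = oct_sum_list (map (\<lambda>k. oct_smult (A k i) (xs ! k)) [0..<length xs])"
  by (simp add: gl_act_def)

lemma word_prod_gl_act_lincomb:
  fixes A :: "nat \<Rightarrow> nat \<Rightarrow> 'f::comm_ring_1"
  assumes "set w \<subseteq> {..<n}"
  shows "\<exists>cs. (\<forall>(c, v)\<in>set cs. length v = length w \<and> set v \<subseteq> {..<n}) \<and>
    (\<forall>xs. length xs = n \<longrightarrow>
      word_prod (gl_act xs A) w = oct_sum_list (map (\<lambda>(c, v). oct_smult c (word_prod xs v)) cs))"
  using assms
proof (induction w rule: rev_induct)
  case Nil
  show ?case by (intro exI[of _ "[(1, [])]"]) (simp add: word_prod_def)
next
  case (snoc i w)
  then have i: "i < n" by simp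
  from snoc obtain cs where cs_words: "\<forall>(c, v)\<in>set cs. length v = length w \<and> set v \<subseteq> {..<n}"
    and cs_prod: "\<And>xs. length xs = n \<Longrightarrow>
      word_prod (gl_act xs A) w = oct_sum_list (map (\<lambda>(c, v). oct_smult c (word_prod xs v)) cs)"
    by auto
  define cs' where "cs' = concat (map (\<lambda>(c, v). map (\<lambda>k. (c * A k i, v @ [k])) [0..<n]) cs)"
  have "word_prod (gl_act xs A) (w @ [i]) =
      oct_sum_list (map (\<lambda>(c, v). oct_smult c (word_prod xs v)) cs')" if xs: "length xs = n" for xs
  proof -
    have "word_prod (gl_act xs A) (w @ [i]) =
        oct_mult (oct_sum_list (map (\<lambda>(c, v). oct_smult c (word_prod xs v)) cs))
          (oct_sum_list (map (\<lambda>k. oct_smult (A k i) (xs ! k)) [0..<n]))"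
      using xs i by (simp add: word_prod_snoc cs_prod nth_gl_act)
    also have "\<dots> = oct_sum_list (map (\<lambda>(c, v). oct_sum_list
        (map (\<lambda>k. oct_smult (c * A k i) (word_prod xs (v @ [k]))) [0..<n])) cs)"
      by (simp add: oct_mult_sum_list_left split_def)
        (simp add: oct_mult_sum_list_right oct_smult_sum_list word_prod_snoc mult.commute split_def)
    also have "\<dots> = oct_sum_list (map (\<lambda>(c, v). oct_smult c (word_prod xs v)) cs')"
      by (simp add: cs'_def map_concat oct_sum_list_concat o_def split_def)
    finally show ?thesis .
  qed
  moreover have "\<forall>(c, v)\<in>set cs'. length v = length (w @ [i]) \<and> set v \<subseteq> {..<n}"
    using cs_words by (fastforce simp: cs'_def)
  ultimately show ?case by blast
qed

lemma word_tr_gl_act_eq: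
  assumes a: "length a = n" and b: "length b = n" and w: "set w \<subseteq> {..<n}"
    and agree: "\<And>v. length v = length w \<Longrightarrow> set v \<subseteq> {..<n} \<Longrightarrow> word_tr a v = word_tr b v"
  shows "word_tr (gl_act a A) w = word_tr (gl_act b A) w"
proof -
  obtain cs where cs_words: "\<forall>(c, v)\<in>set cs. length v = length w \<and> set v \<subseteq> {..<n}"
    and cs_prod: "\<And>xs. length xs = n \<Longrightarrow>
      word_prod (gl_act xs A) w = oct_sum_list (map (\<lambda>(c, v). oct_smult c (word_prod xs v)) cs)"
    using word_prod_gl_act_lincomb[OF w, of A] by blast
  have "word_tr (gl_act xs A) w = (\<Sum>(c, v)\<leftarrow>cs. c * word_tr xs v)" if "length xs = n" for xs
    using that by (simp add: word_tr_def cs_prod oct_tr_sum_list split_def)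
  moreover have "(\<Sum>(c, v)\<leftarrow>cs. c * word_tr a v) = (\<Sum>(c, v)\<leftarrow>cs. c * word_tr b v)"
    using cs_words agree by (intro arg_cong[where f = sum_list] map_cong) auto
  ultimately show ?thesis using a b by simp
qed

lemma oct_norm_lincomb_eq:
  assumes "\<And>k. k \<in> set L \<Longrightarrow> oct_tr (a ! k) = oct_tr (b ! k)"
    and "\<And>k l. k \<in> set L \<Longrightarrow> l \<in> set L \<Longrightarrow>
      oct_tr (oct_mult (a ! k) (a ! l)) = oct_tr (oct_mult (b ! k) (b ! l))"
    and "\<And>k. k \<in> set L \<Longrightarrow> oct_norm (a ! k) = oct_norm (b ! k)"
  shows "oct_norm (oct_sum_list (map (\<lambda>k. oct_smult (c k) (a ! k)) L)) =
    oct_norm (oct_sum_list (map (\<lambda>k. oct_smult (c k) (b ! k)) L))"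
  using assms
proof (induction L)
  case Nil
  show ?case by simp
next
  case (Cons k L)
  have "oct_tr (oct_sum_list (map (\<lambda>k. oct_smult (c k) (a ! k)) L)) =
      oct_tr (oct_sum_list (map (\<lambda>k. oct_smult (c k) (b ! k)) L))"
    using Cons.prems(1) by (auto simp: oct_tr_sum_list intro!: arg_cong[where f = sum_list])
  moreover have "oct_tr (oct_mult (a ! k) (oct_sum_list (map (\<lambda>k. oct_smult (c k) (a ! k)) L))) =
      oct_tr (oct_mult (b ! k) (oct_sum_list (map (\<lambda>k. oct_smult (c k) (b ! k)) L)))"
    using Cons.prems(2)
    by (auto simp: oct_mult_sum_list_right oct_tr_sum_list intro!: arg_cong[where f = sum_list])
  ultimately show ?case using Cons by (simp add: oct_norm_add)
qed

lemma Sd_eq_gl_act: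
  fixes a b :: "'f::comm_ring_1 oct list"
  assumes a: "length a = n" and b: "length b = n" and d: "2 \<le> d"
    and agree: "\<forall>f\<in>Sd n d. f a = f b"
  shows "\<forall>f\<in>Sd n d. f (gl_act a A) = f (gl_act b A)"
proof
  fix f :: "'f oct list \<Rightarrow> 'f"
  assume "f \<in> Sd n d"
  have words: "word_tr a w = word_tr b w" if "set w \<subseteq> {..<n}" "length w \<le> d" for w
    using word_tr_eq_if_Sd_eq[OF agree d] that by blast
  from \<open>f \<in> Sd n d\<close> consider
      (norm) i where "f = (\<lambda>xs. oct_norm (xs ! i))" "i < n"
    | (trace) w where "f = (\<lambda>xs. oct_tr (lnprod xs w))" "w \<noteq> []" "set w \<subseteq> {..<n}" "length w \<le> d"
    unfolding Sd_def by blast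
  then show "f (gl_act a A) = f (gl_act b A)"
  proof cases
    case norm
    then show ?thesis
      using a b d oct_norm_eq_if_Sd_eq[OF agree d] words[of "[k]" for k] words[of "[k, l]" for k l]
        oct_norm_lincomb_eq[of "[0..<n]" a b "\<lambda>k. A k i"]
      by (auto simp: nth_gl_act word_tr_single word_tr_pair)
  next
    case trace
    then show ?thesis
      using word_tr_gl_act_eq[OF a b, of w A] words
      by (simp add: word_tr_def lnprod_eq_word_prod)
  qed
qed

lemma gl_act_gl_act:
  fixes xs :: "'f::comm_ring_1 oct list"
  assumes len: "length xs = n"
    and AB: "\<forall>i<n. \<forall>j<n. (\<Sum>k<n. A i k * B k j) = (if i = j then 1 else 0)"
  shows "gl_act (gl_act xs A) B = xs"
proof (rule nth_equalityI)
  show "length (gl_act (gl_act xs A) B) = length xs" by simp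
next
  fix i assume "i < length (gl_act (gl_act xs A) B)"
  with len have i: "i < n" by simp
  show "gl_act (gl_act xs A) B ! i = xs ! i"
  proof (rule oct_eqI)
    fix j :: nat assume j: "j < 8"
    define c where "c l = oct_coord (xs ! l) j" for l
    have "oct_coord (gl_act (gl_act xs A) B ! i) j = (\<Sum>k<n. B k i * (\<Sum>l<n. A l k * c l))"
      using i j len
      by (simp add: nth_gl_act oct_coord_sum_list oct_coord_smult interv_sum_list_conv_sum_set_nat
          lessThan_atLeast0 c_def)
    also have "\<dots> = (\<Sum>l<n. (\<Sum>k<n. A l k * B k i) * c l)"
      unfolding sum_distrib_left sum_distrib_right
      by (rule sum.swap[THEN trans]) (simp add: mult_ac)
    also have "\<dots> = (\<Sum>l<n. if l = i then c l else 0)"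
      using AB i by (intro sum.cong) auto
    also have "\<dots> = c i"
      using i by simp
    finally show "oct_coord (gl_act (gl_act xs A) B ! i) j = oct_coord (xs ! i) j"
      by (simp add: c_def)
  qed
qed

lemma invertible_mat_gl_act_inverse:
  fixes A :: "nat \<Rightarrow> nat \<Rightarrow> 'f::field"
  assumes "invertible_mat n A"
  obtains B where "invertible_mat n B"
    and "\<And>xs :: 'f oct list. length xs = n \<Longrightarrow> gl_act (gl_act xs A) B = xs"
    and "\<And>xs :: 'f oct list. length xs = n \<Longrightarrow> gl_act (gl_act xs B) A = xs"
proof -
  obtain B where AB: "\<forall>i<n. \<forall>j<n. (\<Sum>k<n. A i k * B k j) = (if i = j then 1 else 0)"
    and BA: "\<forall>i<n. \<forall>j<n. (\<Sum>k<n. B i k * A k j) = (if i = j then 1 else 0)"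
    using assms unfolding invertible_mat_def by blast
  have "invertible_mat n B" unfolding invertible_mat_def using AB BA by blast
  then show thesis
    by (rule that) (simp_all add: gl_act_gl_act[OF _ AB] gl_act_gl_act[OF _ BA])
qed

lemma G2_zero: "g \<in> G2 \<Longrightarrow> g oct_zero = oct_zero"
  unfolding G2_def by (metis (mono_tags, lifting) mem_Collect_eq oct_smult_0)

lemma G2_oct_sum_list:
  "g \<in> G2 \<Longrightarrow> g (oct_sum_list (map f L)) = oct_sum_list (map (\<lambda>l. g (f l)) L)"
  by (induction L) (simp_all add: G2_zero, auto simp: G2_def)

lemma G2_oct_smult: "g \<in> G2 \<Longrightarrow> g (oct_smult c x) = oct_smult c (g x)"
  by (simp add: G2_def)

lemma map_G2_gl_act: "g \<in> G2 \<Longrightarrow> map g (gl_act xs A) = gl_act (map g xs) A"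
  unfolding gl_act_def
  by (auto simp: G2_oct_sum_list G2_oct_smult intro!: arg_cong[where f = oct_sum_list] map_cong)

lemma G2_orbit_gl_act: "G2_orbit (gl_act xs A) = (\<lambda>ys. gl_act ys A) ` G2_orbit xs"
  unfolding G2_orbit_def image_image by (auto simp: map_G2_gl_act)

definition poly_map :: "nat \<Rightarrow> ('f::comm_ring_1 oct list \<Rightarrow> 'f oct list) \<Rightarrow> bool" where
  "poly_map n F \<longleftrightarrow> (\<forall>i<n. \<forall>j<8. (\<lambda>xs. oct_coord (F xs ! i) j) \<in> poly_fun n)"

lemma poly_fun_comp_poly_map:
  assumes "p \<in> poly_fun n" and "poly_map n F"
  shows "(\<lambda>xs. p (F xs)) \<in> poly_fun n"
  using assms(1)
proof (induction rule: poly_fun.induct)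
  case (pconst c)
  show ?case by (rule poly_fun.pconst)
next
  case (pcoord i j)
  with assms(2) show ?case by (simp add: poly_map_def)
next
  case (padd p q)
  then show ?case by (simp add: poly_fun.padd)
next
  case (pmult p q)
  then show ?case by (simp add: poly_fun.pmult)
qed

lemma zariski_closed_vimage_poly_map:
  assumes "zariski_closed n X" and "poly_map n F" and "\<And>xs. length (F xs) = n"
  shows "zariski_closed n {xs \<in> octn n. F xs \<in> X}"
proof -
  obtain P where P: "P \<subseteq> poly_fun n" and X: "X = {xs \<in> octn n. \<forall>p\<in>P. p xs = 0}"
    using assms(1) unfolding zariski_closed_def by blast
  have "{xs \<in> octn n. F xs \<in> X} = {xs \<in> octn n. \<forall>p\<in>(\<lambda>p xs. p (F xs)) ` P. p xs = 0}"
    using assms(3) by (auto simp: X octn_def)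
  moreover have "(\<lambda>p xs. p (F xs)) ` P \<subseteq> poly_fun n"
    using P poly_fun_comp_poly_map[OF _ assms(2)] by blast
  ultimately show ?thesis unfolding zariski_closed_def by blast
qed

lemma poly_fun_sum_list:
  "(\<And>l. l \<in> set L \<Longrightarrow> f l \<in> poly_fun n) \<Longrightarrow> (\<lambda>xs. \<Sum>l\<leftarrow>L. f l xs) \<in> poly_fun n"
proof (induction L)
  case Nil
  show ?case using poly_fun.pconst[of 0 n] by simp
next
  case (Cons l L)
  then show ?case by (simp add: poly_fun.padd)
qed

text \<open>Agrees with gl_act on octn n, but has length n on every list, so it is
  a polynomial map on all of 'f oct list.\<close>

definition gl_act_fixed :: "nat \<Rightarrow> 'f::comm_ring_1 oct list \<Rightarrow> (nat \<Rightarrow> nat \<Rightarrow> 'f) \<Rightarrow> 'f oct list"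
  where "gl_act_fixed n xs A =
    map (\<lambda>i. oct_sum_list (map (\<lambda>k. oct_smult (A k i) (xs ! k)) [0..<n])) [0..<n]"

lemma gl_act_fixed_eq_gl_act: "length xs = n \<Longrightarrow> gl_act_fixed n xs A = gl_act xs A"
  by (simp add: gl_act_fixed_def gl_act_def)

lemma length_gl_act_fixed: "length (gl_act_fixed n xs A) = n"
  by (simp add: gl_act_fixed_def)

lemma poly_map_gl_act_fixed: "poly_map n (\<lambda>xs. gl_act_fixed n xs A)"
  unfolding poly_map_def
proof (intro allI impI)
  fix i j :: nat assume "i < n" "j < 8"
  then have "(\<lambda>xs. oct_coord (gl_act_fixed n xs A ! i) j) =
      (\<lambda>xs. \<Sum>k\<leftarrow>[0..<n]. A k i * oct_coord (xs ! k) j)"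
    by (simp add: gl_act_fixed_def oct_coord_sum_list oct_coord_smult)
  also have "\<dots> \<in> poly_fun n"
    using \<open>j < 8\<close> by (intro poly_fun_sum_list poly_fun.pmult poly_fun.pconst poly_fun.pcoord) auto
  finally show "(\<lambda>xs. oct_coord (gl_act_fixed n xs A ! i) j) \<in> poly_fun n" .
qed

lemma zariski_closed_image_gl_act:
  fixes A :: "nat \<Rightarrow> nat \<Rightarrow> 'f::field"
  assumes closed: "zariski_closed n X" and A: "invertible_mat n A"
  shows "zariski_closed n ((\<lambda>xs. gl_act xs A) ` X)"
proof -
  obtain B where AB: "\<And>xs :: 'f oct list. length xs = n \<Longrightarrow> gl_act (gl_act xs A) B = xs"
    and BA: "\<And>xs :: 'f oct list. length xs = n \<Longrightarrow> gl_act (gl_act xs B) A = xs"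
    using invertible_mat_gl_act_inverse[OF A] by metis
  have X: "X \<subseteq> octn n" using closed unfolding zariski_closed_def by blast
  have "(\<lambda>xs. gl_act xs A) ` X = {xs \<in> octn n. gl_act_fixed n xs B \<in> X}"
  proof (intro equalityI subsetI)
    fix ys assume "ys \<in> (\<lambda>xs. gl_act xs A) ` X"
    then obtain xs where "xs \<in> X" "ys = gl_act xs A" by blast
    with X AB show "ys \<in> {xs \<in> octn n. gl_act_fixed n xs B \<in> X}"
      by (auto simp: octn_def gl_act_fixed_eq_gl_act)
  next
    fix ys assume "ys \<in> {xs \<in> octn n. gl_act_fixed n xs B \<in> X}"
    then have "length ys = n" "gl_act ys B \<in> X" by (auto simp: octn_def gl_act_fixed_eq_gl_act)
    with BA show "ys \<in> (\<lambda>xs. gl_act xs A) ` X" by (metis image_eqI)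
  qed
  with zariski_closed_vimage_poly_map[OF closed poly_map_gl_act_fixed length_gl_act_fixed]
  show ?thesis by simp
qed

theorem lemma7p2:
  fixes a b :: "'f::alg_closed_field oct list"
    and A :: "nat \<Rightarrow> nat \<Rightarrow> 'f"
    and n :: nat
  assumes char2: "CHAR('f) = 2"
    and a: "a \<in> octn n" and b: "b \<in> octn n"
    and A: "invertible_mat n A"
  shows "(G2_orbit a = G2_orbit b \<longleftrightarrow> G2_orbit (gl_act a A) = G2_orbit (gl_act b A))
         \<and> (\<forall>d\<ge>2. (\<forall>f\<in>Sd n d. f a = f b) \<longleftrightarrow>
                       (\<forall>f\<in>Sd n d. f (gl_act a A) = f (gl_act b A)))
         \<and> (zariski_closed n (G2_orbit a) \<longleftrightarrow> zariski_closed n (G2_orbit (gl_act a A)))"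
proof -
  obtain B where B: "invertible_mat n B"
    and AB: "\<And>xs :: 'f oct list. length xs = n \<Longrightarrow> gl_act (gl_act xs A) B = xs"
    using invertible_mat_gl_act_inverse[OF A] by metis
  have la: "length a = n" and lb: "length b = n" using a b by (simp_all add: octn_def)
  have "G2_orbit a = G2_orbit b \<longleftrightarrow> G2_orbit (gl_act a A) = G2_orbit (gl_act b A)"
    using G2_orbit_gl_act[of _ A] G2_orbit_gl_act[of _ B] AB[OF la] AB[OF lb] by metis
  moreover have "(\<forall>f\<in>Sd n d. f a = f b) \<longleftrightarrow> (\<forall>f\<in>Sd n d. f (gl_act a A) = f (gl_act b A))"
    if "2 \<le> d" for d
    using Sd_eq_gl_act[OF la lb that, of A] Sd_eq_gl_act[of "gl_act a A" n "gl_act b A" d B]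
      AB[OF la] AB[OF lb] la lb that by auto
  moreover have "zariski_closed n (G2_orbit a) \<longleftrightarrow> zariski_closed n (G2_orbit (gl_act a A))"
    using zariski_closed_image_gl_act[OF _ A] zariski_closed_image_gl_act[OF _ B]
      G2_orbit_gl_act[of _ A] G2_orbit_gl_act[of _ B] AB[OF la] by metis
  ultimately show ?thesis by blast
qed

end
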